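(* Let $\mathcal{A}$ be a complex Banach algebra with unity, $a\in\mathcal{A}$ and $k$ a positive integer. Then $a$ is g$\pi$-Hirano invertible if and only if $a^{k}$ is g$\pi$-Hirano invertible.
   Context: $\mathcal{A}^{qnil}$ denotes the set of quasinilpotent elements of $\mathcal{A}$ (spectrum equal to $\{0\}$). An element $a\in\mathcal{A}$ is g$\pi$-Hirano invertible if there exists $x\in\mathcal{A}$ with $xax=x$, $ax=xa$ and $a-a^{n+2}x\in\mathcal{A}^{qnil}$ for some positive integer $n$. *)

theory Defs
  imports "HOL-Analysis.Analysis"
begin

class complex_banach_algebra_1 = real_normed_algebra_1 + banach +
  fixes scaleC :: "complex \<Rightarrow> 'a \<Rightarrow> 'a"
  assumes scaleC_add_right: "scaleC c (x + y) = scaleC c x + scaleC c y"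
    and scaleC_add_left: "scaleC (b + c) x = scaleC b x + scaleC c x"
    and scaleC_scaleC: "scaleC b (scaleC c x) = scaleC (b * c) x"
    and scaleC_one: "scaleC 1 x = x"
    and scaleR_scaleC: "scaleR r x = scaleC (complex_of_real r) x"
    and norm_scaleC: "norm (scaleC c x) = cmod c * norm x"
    and mult_scaleC_left: "scaleC c x * y = scaleC c (x * y)"
    and mult_scaleC_right: "x * scaleC c y = scaleC c (x * y)"

definition alg_invertible :: "'a::ring_1 \<Rightarrow> bool" where
  "alg_invertible u \<longleftrightarrow> (\<exists>v. u * v = 1 \<and> v * u = 1)"

definition spectrum :: "'a::complex_banach_algebra_1 \<Rightarrow> complex set" where
  "spectrum a = {z. \<not> alg_invertible (scaleC z 1 - a)}"

definition quasinilpotent :: "'a::complex_banach_algebra_1 \<Rightarrow> bool" where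
  "quasinilpotent a \<longleftrightarrow> spectrum a = {0}"

definition gpi_Hirano_invertible :: "'a::complex_banach_algebra_1 \<Rightarrow> bool" where
  "gpi_Hirano_invertible a \<longleftrightarrow>
     (\<exists>x. x * a * x = x \<and> a * x = x * a \<and>
          (\<exists>n::nat. n > 0 \<and> quasinilpotent (a - a ^ (n + 2) * x)))"

end

(* Let x be a g\<pi>-Hirano inverse of a and p = a x. Then p is an idempotent commuting with a,
   a (1 - p) is quasinilpotent, and a p is invertible in the corner p A p with spectrum there
   consisting of n-th roots of unity. By the spectral mapping theorem for polynomials these
   conditions pass from a to a^k (with the same n) and back from a^k to a (with k n), provided
   p commutes with a. For the way back, p is the spectral idempotent of a^k, so it commutes with
   everything commuting with a^k: the off-diagonal corners of a solve Sylvester equations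
   u X = X B with u quasinilpotent and B invertible, whose only solution is 0 because powers of
   a quasinilpotent element decay faster than any geometric sequence. This decay (spectral radius
   zero) follows without Cauchy integrals by averaging the resolvent over roots of unity; it also
   gives the nonemptiness of the spectrum needed by the spectral mapping theorem. *)

theory Submission
  imports Defs "HOL-Computational_Algebra.Fundamental_Theorem_Algebra"
begin

section \<open>Invertibility in rings\<close>

lemma alg_invertible_one [simp]: "alg_invertible (1::'a::ring_1)"
  unfolding alg_invertible_def by (rule exI[of _ 1]) simp

lemma alg_invertible_left_right:
  fixes w :: "'a::ring_1"
  assumes "v * w = 1" "w * v' = 1"
  shows "alg_invertible w"
proof -
  have "v = v * (w * v')" using assms(2) by simp
  also have "\<dots> = v'" using assms(1) by (simp add: mult.assoc[symmetric])
  finally have "v = v'" .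
  then show ?thesis using assms unfolding alg_invertible_def by blast
qed

lemma alg_invertible_mult:
  fixes v w :: "'a::ring_1"
  assumes "alg_invertible v" "alg_invertible w"
  shows "alg_invertible (v * w)"
proof -
  obtain v' where v': "v * v' = 1" "v' * v = 1" using assms(1) unfolding alg_invertible_def by blast
  obtain w' where w': "w * w' = 1" "w' * w = 1" using assms(2) unfolding alg_invertible_def by blast
  have "v * (w * w') * v' = 1" "w' * (v' * v) * w = 1" using v' w' by simp_all
  then have "v * w * (w' * v') = 1" "w' * v' * (v * w) = 1" by (simp_all only: mult.assoc)
  then show ?thesis unfolding alg_invertible_def by blast
qed

lemma alg_invertible_mult_commuting_iff:
  fixes v w :: "'a::ring_1"
  assumes "v * w = w * v"
  shows "alg_invertible (v * w) \<longleftrightarrow> alg_invertible v \<and> alg_invertible w"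
proof
  assume "alg_invertible (v * w)"
  then obtain z where z: "v * w * z = 1" "z * (v * w) = 1" unfolding alg_invertible_def by blast
  have "(z * w) * v = 1" using z(2) by (simp add: mult.assoc assms[symmetric])
  moreover have "v * (w * z) = 1" "(z * v) * w = 1" using z by (simp_all add: mult.assoc)
  moreover have "w * (v * z) = 1" using z(1) by (simp add: mult.assoc[symmetric] assms[symmetric])
  ultimately show "alg_invertible v \<and> alg_invertible w" by (blast intro: alg_invertible_left_right)
qed (blast intro: alg_invertible_mult)

lemma alg_invertible_minus_iff [simp]: "alg_invertible (- w) \<longleftrightarrow> alg_invertible (w::'a::ring_1)"
proof -
  have "(- w) * (- v) = w * v" "(- v) * (- w) = v * w" for v by simp_all
  then show ?thesis unfolding alg_invertible_def by (metis minus_minus)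
qed

lemma power_mult_commuting:
  fixes v w :: "'a::monoid_mult"
  assumes "v * w = w * v"
  shows "(v * w) ^ n = v ^ n * w ^ n"
proof (induct n)
  case (Suc n)
  have "w * v ^ n = v ^ n * w" using power_commuting_commutes[OF assms] by simp
  then show ?case using Suc by (simp add: mult.assoc[symmetric]) (simp add: mult.assoc)
qed simp

lemma alg_invertible_power_iff:
  fixes w :: "'a::ring_1"
  assumes "0 < n"
  shows "alg_invertible (w ^ n) \<longleftrightarrow> alg_invertible w"
proof
  assume "alg_invertible (w ^ n)"
  moreover obtain m where "n = Suc m" using assms by (cases n) auto
  ultimately show "alg_invertible w"
    using alg_invertible_mult_commuting_iff[of w "w ^ m"] power_commutes[of w m] by simp
next
  show "alg_invertible w \<Longrightarrow> alg_invertible (w ^ n)"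
    by (induct n) (simp_all add: alg_invertible_mult)
qed

definition alg_inverse :: "'a::ring_1 \<Rightarrow> 'a" where
  "alg_inverse w = (SOME v. w * v = 1 \<and> v * w = 1)"

lemma alg_inverse:
  assumes "alg_invertible w"
  shows "w * alg_inverse w = 1" "alg_inverse w * w = 1"
  using someI_ex[OF assms[unfolded alg_invertible_def]] unfolding alg_inverse_def by auto

lemma alg_inverse_commute:
  fixes v w :: "'a::ring_1"
  assumes "alg_invertible w" "v * w = w * v"
  shows "v * alg_inverse w = alg_inverse w * v"
proof -
  have "v * alg_inverse w = alg_inverse w * w * v * alg_inverse w"
    using alg_inverse[OF assms(1)] by simp
  also have "\<dots> = alg_inverse w * (w * v) * alg_inverse w" by (simp only: mult.assoc)
  also have "\<dots> = alg_inverse w * v * (w * alg_inverse w)" by (simp only: assms(2)[symmetric] mult.assoc)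
  also have "\<dots> = alg_inverse w * v"
    using alg_inverse[OF assms(1)] by simp
  finally show ?thesis .
qed

lemma power_add_orthogonal:
  fixes v w :: "'a::ring_1"
  assumes "v * w = 0" "w * v = 0" "0 < n"
  shows "(v + w) ^ n = v ^ n + w ^ n"
  using assms(3)
proof (induct n)
  case (Suc n)
  show ?case
  proof (cases "n = 0")
    case False
    then obtain m where n: "n = Suc m" by (cases n) auto
    have "v * w ^ n = 0" "w * v ^ n = 0"
      using assms(1,2) by (simp_all add: n mult.assoc[symmetric])
    have "(v + w) ^ Suc n = (v + w) * (v ^ n + w ^ n)" using Suc False by simp
    also have "\<dots> = v ^ Suc n + w ^ Suc n + (v * w ^ n + w * v ^ n)"
      by (simp add: algebra_simps)
    finally show ?thesis using \<open>v * w ^ n = 0\<close> \<open>w * v ^ n = 0\<close> by (simp only: add_0_right)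
  qed simp
qed simp

lemma idempotent_power:
  fixes p :: "'a::monoid_mult"
  assumes "p * p = p" "0 < k"
  shows "p ^ k = p"
proof -
  have "p ^ Suc m = p" for m by (induct m) (simp_all add: assms(1))
  then show ?thesis using assms(2) by (metis gr0_implies_Suc)
qed

lemma power_mult_commuting_idempotent:
  fixes a p :: "'a::monoid_mult"
  assumes "p * p = p" "a * p = p * a" "0 < k"
  shows "(a * p) ^ k = a ^ k * p"
  using power_mult_commuting[OF assms(2), of k] idempotent_power[OF assms(1,3)] by simp

lemma power_add_complement_idempotent:
  fixes a p :: "'a::ring_1"
  assumes p: "p * p = p" and ap: "a * p = p * a"
  shows "(a * p + (1 - p)) ^ k = a ^ k * p + (1 - p)"
proof (cases "k = 0")
  case False
  have q: "(1 - p) * (1 - p) = 1 - p" using p by (simp add: algebra_simps)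
  have "p * (a * z) = a * (p * z)" for z using ap by (simp add: mult.assoc[symmetric])
  then have "a * p * (1 - p) = 0" "(1 - p) * (a * p) = 0" using p by (simp_all add: algebra_simps)
  then have "(a * p + (1 - p)) ^ k = (a * p) ^ k + (1 - p) ^ k"
    using False by (intro power_add_orthogonal) simp_all
  then show ?thesis
    using False power_mult_commuting_idempotent[OF p ap] idempotent_power[OF q] by simp
qed simp

lemma one_minus_mult_sum_power:
  fixes W :: "'a::ring_1"
  shows "(1 - W) * (\<Sum>i<N. W ^ i) = 1 - W ^ N"
proof (induct N)
  case (Suc N)
  have "(1 - W) * (\<Sum>i<Suc N. W ^ i) = (1 - W) * (\<Sum>i<N. W ^ i) + (1 - W) * W ^ N"
    by (simp add: distrib_left)
  also have "\<dots> = 1 - W ^ N + (W ^ N - W ^ Suc N)" by (simp only: Suc) (simp add: left_diff_distrib)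
  finally show ?case by simp
qed simp

section \<open>Complex scalars and the spectrum\<close>

definition of_complex :: "complex \<Rightarrow> 'a::complex_banach_algebra_1" where
  "of_complex c = scaleC c 1"

lemma of_complex_mult_left: "of_complex c * x = scaleC c x"
  unfolding of_complex_def by (simp add: mult_scaleC_left)

lemma of_complex_commute: "x * of_complex c = of_complex c * x"
  unfolding of_complex_def by (simp add: mult_scaleC_left mult_scaleC_right)

lemma of_complex_add: "of_complex (b + c) = of_complex b + of_complex c"
  unfolding of_complex_def by (simp add: scaleC_add_left)

lemma of_complex_mult: "of_complex (b * c) = of_complex b * of_complex c"
  unfolding of_complex_def by (simp add: mult_scaleC_left scaleC_scaleC)

lemma of_complex_0 [simp]: "of_complex 0 = 0"
  using of_complex_add[of 0 0] by simp

lemma of_complex_1 [simp]: "of_complex 1 = 1"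
  unfolding of_complex_def by (simp add: scaleC_one)

lemma of_complex_minus: "of_complex (- c) = (- of_complex c :: 'a::complex_banach_algebra_1)"
proof -
  have "of_complex c + of_complex (- c) = (0 :: 'a)" using of_complex_add[of c "- c"] by simp
  from minus_unique[OF this] show ?thesis by simp
qed

lemma of_complex_diff: "of_complex (b - c) = of_complex b - of_complex c"
  using of_complex_add[of b "- c"] by (simp add: of_complex_minus)

lemma of_complex_sum: "of_complex (\<Sum>i\<in>A. f i) = (\<Sum>i\<in>A. of_complex (f i))"
  by (induct A rule: infinite_finite_induct) (simp_all add: of_complex_add)

lemma of_complex_of_nat: "of_complex (of_nat n) = of_nat n"
  by (induct n) (simp_all add: of_complex_add)

lemma norm_of_complex_mult: "norm (of_complex c * x) = cmod c * norm x"
  by (simp add: of_complex_mult_left norm_scaleC)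

lemma power_of_complex_mult:
  fixes x :: "'a::complex_banach_algebra_1"
  shows "(of_complex c * x) ^ n = of_complex (c ^ n) * x ^ n"
proof -
  have "of_complex (c ^ n) = (of_complex c ^ n :: 'a)" by (induct n) (simp_all add: of_complex_mult)
  moreover have "(of_complex c * x) ^ n = of_complex c ^ n * x ^ n"
    by (rule power_mult_commuting) (simp add: of_complex_commute)
  ultimately show ?thesis by simp
qed

lemma alg_invertible_of_complex: "c \<noteq> 0 \<Longrightarrow> alg_invertible (of_complex c)"
  unfolding alg_invertible_def by (rule exI[of _ "of_complex (1 / c)"]) (simp add: of_complex_mult[symmetric])

lemma mem_spectrum_iff: "z \<in> spectrum w \<longleftrightarrow> \<not> alg_invertible (of_complex z - w)"
  unfolding spectrum_def of_complex_def by simp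

lemma spectrum_subset_zero_iff:
  "spectrum w \<subseteq> {0} \<longleftrightarrow> (\<forall>z. z \<noteq> 0 \<longrightarrow> alg_invertible (of_complex z - w))"
  by (auto simp: mem_spectrum_iff)

lemma spectrum_add_orthogonal:
  fixes u v :: "'a::complex_banach_algebra_1"
  assumes "u * v = 0" "v * u = 0"
  shows "spectrum (u + v) - {0} = (spectrum u \<union> spectrum v) - {0}"
proof -
  have inv_iff: "alg_invertible (of_complex z - u) \<and> alg_invertible (of_complex z - v) \<longleftrightarrow>
      alg_invertible (of_complex z - (u + v))" if "z \<noteq> 0" for z
  proof -
    let ?z = "of_complex z :: 'a"
    have uz: "u * ?z = ?z * u" and vz: "v * ?z = ?z * v" by (simp_all only: of_complex_commute)
    have eq: "(?z - u) * (?z - v) = ?z * (?z - (u + v))"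
      using assms(1) by (simp add: algebra_simps uz)
    have comm: "(?z - u) * (?z - v) = (?z - v) * (?z - u)"
      using assms by (simp add: algebra_simps uz vz)
    have "alg_invertible (?z - u) \<and> alg_invertible (?z - v) \<longleftrightarrow> alg_invertible (?z * (?z - (u + v)))"
      using alg_invertible_mult_commuting_iff[OF comm] by (simp only: eq)
    also have "\<dots> \<longleftrightarrow> alg_invertible (?z - (u + v))"
      using alg_invertible_mult_commuting_iff[OF of_complex_commute[symmetric], of z "?z - (u + v)"]
        alg_invertible_of_complex[OF that, where 'a='a] by simp
    finally show ?thesis .
  qed
  show ?thesis
  proof (rule set_eqI)
    show "z \<in> spectrum (u + v) - {0} \<longleftrightarrow> z \<in> (spectrum u \<union> spectrum v) - {0}" for z
      using inv_iff[of z, symmetric] by (cases "z = 0") (simp_all add: mem_spectrum_iff)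
  qed
qed

lemma alg_invertible_one_minus_of_complex_mult:
  fixes u :: "'a::complex_banach_algebra_1"
  assumes "spectrum u \<subseteq> {0}"
  shows "alg_invertible (1 - of_complex l * u)"
proof (cases "l = 0")
  case False
  have "1 - of_complex l * u = of_complex l * (of_complex (1 / l) - u)"
    using False by (simp add: right_diff_distrib of_complex_mult[symmetric])
  then show ?thesis using assms False
    by (simp add: spectrum_subset_zero_iff alg_invertible_mult alg_invertible_of_complex)
qed simp

lemma spectrum_add_orthogonal_subset_zero_iff:
  fixes u v :: "'a::complex_banach_algebra_1"
  assumes "u * v = 0" "v * u = 0"
  shows "spectrum (u + v) \<subseteq> {0} \<longleftrightarrow> spectrum u \<subseteq> {0} \<and> spectrum v \<subseteq> {0}"
  using spectrum_add_orthogonal[OF assms] by blast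

section \<open>Polynomials in an element\<close>

(* Horner evaluation; the library's poly needs a commutative ring. *)
definition peval :: "complex poly \<Rightarrow> 'a \<Rightarrow> 'a::complex_banach_algebra_1" where
  "peval p w = fold_coeffs (\<lambda>c r. of_complex c + w * r) p 0"

lemma peval_0 [simp]: "peval 0 w = 0"
  by (simp add: peval_def)

lemma peval_pCons [simp]: "peval (pCons c p) w = of_complex c + w * peval p w"
  by (cases "p = 0 \<and> c = 0") (auto simp: peval_def)

lemma peval_add [simp]: "peval (p + q) w = peval p w + peval q w"
proof (induction p arbitrary: q)
  case (pCons a p)
  then show ?case by (cases q) (simp add: algebra_simps of_complex_add)
qed simp

lemma peval_minus [simp]: "peval (- p) w = - peval p w"
  by (induction p) (simp_all add: of_complex_minus)

lemma peval_diff [simp]: "peval (p - q) w = peval p w - peval q w"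
  using peval_add[of p "- q" w] by simp

lemma peval_smult [simp]: "peval (smult c p) w = of_complex c * peval p w"
proof (induction p)
  case (pCons a p)
  have "w * (of_complex c * peval p w) = of_complex c * (w * peval p w)"
    by (simp only: mult.assoc[symmetric] of_complex_commute)
  with pCons show ?case by (simp add: of_complex_mult distrib_left)
qed simp

lemma peval_mult [simp]: "peval (p * q) w = peval p w * peval q w"
  by (induction p) (simp_all add: distrib_right mult.assoc)

lemma peval_monom [simp]: "peval (monom c n) w = of_complex c * w ^ n"
proof (induction n)
  case (Suc n)
  have "w * (of_complex c * w ^ n) = of_complex c * w ^ Suc n"
    by (simp only: mult.assoc[symmetric] of_complex_commute power_Suc)
  with Suc show ?case by (simp add: monom_Suc)
qed (simp add: monom_0)

lemma peval_linear: "peval [:- t, 1:] w = w - of_complex t"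
  by (simp add: of_complex_minus)

lemma peval_commute: "peval p w * peval q w = peval q w * peval p w"
  by (simp only: peval_mult[symmetric] mult.commute)

lemma alg_invertible_diff_if_peval_root:
  fixes w :: "'a::complex_banach_algebra_1"
  assumes "poly f t = 0" "alg_invertible (peval f w)"
  shows "alg_invertible (of_complex t - w)"
proof -
  obtain g where "f = [:- t, 1:] * g" using assms(1) poly_eq_0_iff_dvd by blast
  then have "alg_invertible ((w - of_complex t) * peval g w)"
    using assms(2) by (simp only: peval_mult peval_linear)
  moreover have "(w - of_complex t) * peval g w = peval g w * (w - of_complex t)"
    using peval_commute[of "[:- t, 1:]" w g] by (simp only: peval_linear)
  ultimately have "alg_invertible (w - of_complex t)" using alg_invertible_mult_commuting_iff by blast
  then show ?thesis using alg_invertible_minus_iff[of "w - of_complex t"] by simp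
qed

lemma alg_invertible_peval:
  fixes w :: "'a::complex_banach_algebra_1"
  assumes "f \<noteq> 0" "\<And>t. poly f t = 0 \<Longrightarrow> alg_invertible (of_complex t - w)"
  shows "alg_invertible (peval f w)"
  using assms
proof (induction "degree f" arbitrary: f rule: less_induct)
  case less
  show ?case
  proof (cases "degree f = 0")
    case True
    then obtain c where "f = [:c:]" "c \<noteq> 0" using less.prems(1) by (metis degree_eq_zeroE pCons_0_0)
    then show ?thesis by (simp add: alg_invertible_of_complex)
  next
    case False
    then have "\<not> constant (poly f)" by (simp add: constant_degree)
    then obtain t where t: "poly f t = 0" using fundamental_theorem_of_algebra by blast
    then obtain g where g: "f = [:- t, 1:] * g" using poly_eq_0_iff_dvd by blast
    with less.prems(1) have "g \<noteq> 0" by auto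
    moreover have "degree g < degree f" unfolding g using \<open>g \<noteq> 0\<close> by (subst degree_mult_eq) auto
    moreover have "alg_invertible (of_complex s - w)" if "poly g s = 0" for s
      using less.prems(2) g that by simp
    ultimately have "alg_invertible (peval g w)" using less.hyps by blast
    moreover have "alg_invertible (w - of_complex t)"
      using less.prems(2)[OF t] alg_invertible_minus_iff[of "of_complex t - w"] by simp
    ultimately show ?thesis using g by (simp only: peval_mult peval_linear alg_invertible_mult)
  qed
qed

section \<open>Elements with spectrum in \<open>{0}\<close>\<close>

lemma norm_diff_one_le_if_mult_one_minus_eq_one:
  fixes x w :: "'a::real_normed_algebra_1"
  assumes "x * (1 - w) = 1" "norm w \<le> e" "e < 1"
  shows "norm (x - 1) \<le> e / (1 - e)"
proof -
  have "x - 1 = (1 + (x - 1)) * w" using assms(1) by (simp add: algebra_simps)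
  then have "norm (x - 1) \<le> (1 + norm (x - 1)) * e"
    using norm_mult_ineq[of "1 + (x - 1)" w] norm_triangle_ineq[of 1 "x - 1"] assms(2)
    by (smt (verit) mult_mono norm_ge_zero norm_one)
  then show ?thesis using assms(3) by (simp add: field_simps)
qed

lemma norm_le_if_mult_one_minus_eq_one:
  fixes x w :: "'a::real_normed_algebra_1"
  assumes "x * (1 - w) = 1" "norm (x - 1) \<le> e" "e < 1"
  shows "norm w \<le> e / (1 - e)"
proof -
  have "w = (x - 1) * (1 - w)" using assms(1) by (simp add: algebra_simps)
  then have "norm w \<le> e * (1 + norm w)"
    using norm_mult_ineq[of "x - 1" "1 - w"] norm_triangle_ineq4[of 1 w] assms(2)
    by (smt (verit) mult_mono norm_ge_zero norm_one)
  then show ?thesis using assms(3) by (simp add: field_simps)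
qed

lemma sum_roots_unity_power:
  assumes "0 < i" "i < N"
  shows "(\<Sum>k<N. (cis (2 * pi / N) ^ k) ^ i) = 0"
proof -
  define x where "x = cis (2 * pi / N) ^ i"
  have inj: "inj_on (\<lambda>k. cis (2 * pi * real k / real N)) {..<N}"
    using Complex.bij_betw_roots_unity[of N] assms by (simp add: bij_betw_def)
  have "cis (2 * pi * real i / real N) \<noteq> cis (2 * pi * real 0 / real N)"
    using inj_onD[OF inj, of i 0] assms by auto
  then have "x \<noteq> 1" unfolding x_def by (simp add: Complex.DeMoivre mult_ac)
  moreover have "x ^ N = (cis (2 * pi / N) ^ N) ^ i" unfolding x_def by (simp add: power_mult[symmetric] mult.commute)
  then have "x ^ N = 1" using assms by (simp add: Complex.DeMoivre complex_eq_iff)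
  ultimately have "(\<Sum>k<N. x ^ k) = 0" by (simp add: geometric_sum)
  then show ?thesis unfolding x_def by (simp add: power_mult[symmetric] mult.commute)
qed

lemma tendsto_power_mult_zero_if_eventually_bounded:
  fixes a :: "nat \<Rightarrow> real"
  assumes "\<forall>\<^sub>F N in sequentially. s ^ N * a N \<le> C" "\<And>N. 0 \<le> a N" "0 \<le> t" "t < s"
  shows "(\<lambda>N. t ^ N * a N) \<longlonglongrightarrow> 0"
proof (rule Lim_null_comparison)
  have "0 < s" using assms(3,4) by simp
  show "(\<lambda>N. C * (t / s) ^ N) \<longlonglongrightarrow> 0"
    using assms(3,4) by (intro tendsto_mult_right_zero LIMSEQ_power_zero) simp
  show "\<forall>\<^sub>F N in sequentially. norm (t ^ N * a N) \<le> C * (t / s) ^ N"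
    using assms(1)
  proof eventually_elim
    case (elim N)
    have "t ^ N * a N = (t / s) ^ N * (s ^ N * a N)"
      using \<open>0 < s\<close> by (simp add: power_divide)
    also have "\<dots> \<le> (t / s) ^ N * C"
      using elim assms(3) \<open>0 < s\<close> by (intro mult_left_mono) simp_all
    finally show ?case using assms(2,3) by (simp add: mult.commute)
  qed
qed

(* (1 - l u)^-1 = (1 / l) (1 / l - u)^-1, a rescaled resolvent; when spectrum u \<subseteq> {0} it is defined
   for every l, including l = 0. *)
definition resolvent :: "'a::complex_banach_algebra_1 \<Rightarrow> complex \<Rightarrow> 'a" where
  "resolvent u l = alg_inverse (1 - of_complex l * u)"

context
  fixes u :: "'a::complex_banach_algebra_1"
  assumes spectrum_u: "spectrum u \<subseteq> {0}"
begin

lemma resolvent_inverse: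
  "resolvent u l * (1 - of_complex l * u) = 1" "(1 - of_complex l * u) * resolvent u l = 1"
  unfolding resolvent_def
  using alg_inverse[OF alg_invertible_one_minus_of_complex_mult[OF spectrum_u]] by auto

lemma resolvent_diff:
  "resolvent u l - resolvent u m = of_complex (l - m) * (resolvent u l * u * resolvent u m)"
proof -
  let ?R = "resolvent u"
  have "?R l - ?R m = ?R l * (1 - of_complex m * u) * ?R m - ?R l * (1 - of_complex l * u) * ?R m"
    using resolvent_inverse by (simp add: mult.assoc)
  also have "\<dots> = ?R l * ((1 - of_complex m * u) - (1 - of_complex l * u)) * ?R m"
    by (simp add: algebra_simps)
  also have "(1 - of_complex m * u) - (1 - of_complex l * u) = of_complex (l - m) * u"
    by (simp add: of_complex_diff algebra_simps)
  also have "?R l * (of_complex (l - m) * u) * ?R m = of_complex (l - m) * (?R l * u * ?R m)"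
    by (simp only: mult.assoc[symmetric] of_complex_commute)
  finally show ?thesis .
qed

lemma isCont_resolvent: "isCont (resolvent u) m"
proof -
  let ?R = "resolvent u"
  define c where "c = norm u * norm (?R m)"
  have diff_le: "norm (?R l - ?R m) \<le> cmod (l - m) * c * norm (?R l)" for l
  proof -
    have "norm (?R l - ?R m) = cmod (l - m) * norm (?R l * u * ?R m)"
      by (simp add: resolvent_diff norm_of_complex_mult)
    also have "\<dots> \<le> cmod (l - m) * (norm (?R l) * norm u * norm (?R m))"
      by (intro mult_left_mono order.trans[OF norm_mult_ineq] mult_right_mono norm_mult_ineq) simp_all
    finally show ?thesis by (simp add: c_def mult_ac)
  qed
  have "((\<lambda>l. cmod (l - m) * c) \<longlongrightarrow> 0) (at m)"
    by (intro tendsto_mult_left_zero tendsto_norm_zero LIM_zero tendsto_ident_at)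
  then have "\<forall>\<^sub>F l in at m. cmod (l - m) * c < 1/2" by (rule order_tendstoD) simp
  then have "\<forall>\<^sub>F l in at m. norm (?R l - ?R m) \<le> 2 * norm (?R m) * (cmod (l - m) * c)"
  proof eventually_elim
    case (elim l)
    have small: "cmod (l - m) * c * norm (?R l) \<le> 1/2 * norm (?R l)"
      using elim by (intro mult_right_mono) simp_all
    have "norm (?R l) \<le> norm (?R m) + norm (?R l - ?R m)" by (rule norm_triangle_sub)
    then have "norm (?R l) \<le> 2 * norm (?R m)" using diff_le[of l] small by simp
    then have "cmod (l - m) * c * norm (?R l) \<le> cmod (l - m) * c * (2 * norm (?R m))"
      by (intro mult_left_mono) (simp_all add: c_def)
    then show ?case using diff_le[of l] by (simp add: mult_ac)
  qed
  moreover have "((\<lambda>l. 2 * norm (?R m) * (cmod (l - m) * c)) \<longlongrightarrow> 0) (at m)"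
    by (intro tendsto_mult_right_zero \<open>((\<lambda>l. cmod (l - m) * c) \<longlongrightarrow> 0) (at m)\<close>)
  ultimately have "((\<lambda>l. ?R l - ?R m) \<longlongrightarrow> 0) (at m)" by (rule Lim_null_comparison)
  then show ?thesis unfolding isCont_def by (rule LIM_zero_cancel)
qed

(* Averaging over the N-th roots of unity keeps, in the Neumann series of the resolvent, only the
   powers (l u)^i with N dividing i. *)
lemma resolvent_root_average:
  assumes "0 < N"
  shows "of_complex (1 / of_nat N) * (\<Sum>k<N. resolvent u (cis (2 * pi / N) ^ k * l))
      * (1 - (of_complex l * u) ^ N) = 1"
proof -
  define \<omega> where "\<omega> = cis (2 * pi / N)"
  define w where "w = of_complex l * u"
  have "\<omega> ^ N = 1" using assms by (simp add: \<omega>_def Complex.DeMoivre complex_eq_iff)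
  then have unit_pow: "(\<omega> ^ k) ^ N = 1" for k by (simp add: power_mult[symmetric] mult.commute[of k] power_mult)
  have summand: "resolvent u (\<omega> ^ k * l) * (1 - w ^ N) = (\<Sum>i<N. of_complex ((\<omega> ^ k) ^ i) * w ^ i)" for k
  proof -
    define W where "W = of_complex (\<omega> ^ k) * w"
    have "W ^ N = w ^ N" unfolding W_def power_of_complex_mult by (simp add: unit_pow)
    have "resolvent u (\<omega> ^ k * l) * (1 - w ^ N) = resolvent u (\<omega> ^ k * l) * (1 - W) * (\<Sum>i<N. W ^ i)"
      by (simp add: mult.assoc one_minus_mult_sum_power \<open>W ^ N = w ^ N\<close>)
    also have "resolvent u (\<omega> ^ k * l) * (1 - W) = 1"
      using resolvent_inverse(1)[of "\<omega> ^ k * l"]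
      by (simp add: W_def w_def of_complex_mult mult.assoc)
    finally show ?thesis by (simp add: W_def power_of_complex_mult)
  qed
  have "(\<Sum>k<N. resolvent u (\<omega> ^ k * l)) * (1 - w ^ N) = (\<Sum>k<N. \<Sum>i<N. of_complex ((\<omega> ^ k) ^ i) * w ^ i)"
    by (simp add: sum_distrib_right summand)
  also have "\<dots> = (\<Sum>i<N. \<Sum>k<N. of_complex ((\<omega> ^ k) ^ i) * w ^ i)"
    by (rule sum.swap)
  also have "\<dots> = (\<Sum>i<N. of_complex (\<Sum>k<N. (\<omega> ^ k) ^ i) * w ^ i)"
    by (simp add: of_complex_sum sum_distrib_right)
  also have "\<dots> = (\<Sum>i<N. if i = 0 then of_nat N else 0)"
    by (rule sum.cong) (simp_all add: \<omega>_def sum_roots_unity_power of_complex_of_nat)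
  also have "\<dots> = of_nat N" using assms by simp
  finally have "(\<Sum>k<N. resolvent u (\<omega> ^ k * l)) * (1 - w ^ N) = of_nat N" .
  then have "of_complex (1 / of_nat N) * (\<Sum>k<N. resolvent u (\<omega> ^ k * l)) * (1 - w ^ N)
      = of_complex (1 / of_nat N) * of_complex (of_nat N)"
    by (simp add: mult.assoc of_complex_of_nat)
  also have "\<dots> = 1" using assms by (simp add: of_complex_mult[symmetric])
  finally show ?thesis by (simp add: \<omega>_def w_def)
qed

(* A small (r u)^N makes the average at radius r close to 1; by uniform continuity of the resolvent
   so is the average at radius s, which forces (s u)^N to be small as well. *)
lemma eventually_power_norm_le_step:
  assumes "0 \<le> r" "r < s"
    and close: "\<And>x x'. cmod x \<le> s \<Longrightarrow> cmod x' \<le> s \<Longrightarrow> cmod (x' - x) \<le> s - r \<Longrightarrow>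
      norm (resolvent u x' - resolvent u x) \<le> 1/16"
    and small: "\<forall>\<^sub>F N in sequentially. r ^ N * norm (u ^ N) \<le> 1/8"
  shows "\<forall>\<^sub>F N in sequentially. s ^ N * norm (u ^ N) \<le> 1/3"
  using small eventually_gt_at_top[of 0]
proof eventually_elim
  case (elim N)
  define \<omega> where "\<omega> = cis (2 * pi / N)"
  define A where "A t = of_complex (1 / of_nat N) * (\<Sum>k<N. resolvent u (\<omega> ^ k * complex_of_real t))" for t
  have A: "A t * (1 - (of_complex (complex_of_real t) * u) ^ N) = 1" for t
    unfolding A_def \<omega>_def by (rule resolvent_root_average[OF elim(2)])
  have norm_pow: "norm ((of_complex (complex_of_real t) * u) ^ N) = \<bar>t\<bar> ^ N * norm (u ^ N)" for t
    by (simp add: power_of_complex_mult norm_of_complex_mult norm_power)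
  have "norm (A r - 1) \<le> (1/8) / (1 - 1/8)"
    using norm_pow[of r] elim(1) \<open>0 \<le> r\<close>
    by (intro norm_diff_one_le_if_mult_one_minus_eq_one[OF A]) simp_all
  moreover have "norm (A s - A r) \<le> 1/16"
  proof -
    have "norm (resolvent u (\<omega> ^ k * s) - resolvent u (\<omega> ^ k * r)) \<le> 1/16" for k
    proof (rule close)
      have "cmod (\<omega> ^ k) = 1" by (simp add: \<omega>_def norm_power)
      moreover have "cmod (complex_of_real s - complex_of_real r) = s - r"
        using assms(2) by (simp only: of_real_diff[symmetric] norm_of_real)
      ultimately show "cmod (\<omega> ^ k * r) \<le> s" "cmod (\<omega> ^ k * s) \<le> s" "cmod (\<omega> ^ k * s - \<omega> ^ k * r) \<le> s - r"
        using assms(1,2) by (simp_all add: norm_mult right_diff_distrib[symmetric])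
    qed
    then have "norm (\<Sum>k<N. resolvent u (\<omega> ^ k * s) - resolvent u (\<omega> ^ k * r)) \<le> (\<Sum>k<N. 1/16)"
      by (intro sum_norm_le)
    moreover have "A s - A r =
        of_complex (1 / of_nat N) * (\<Sum>k<N. resolvent u (\<omega> ^ k * s) - resolvent u (\<omega> ^ k * r))"
      unfolding A_def by (simp add: sum_subtractf right_diff_distrib)
    ultimately show ?thesis using elim(2) by (simp add: norm_of_complex_mult norm_divide field_simps)
  qed
  ultimately have "norm (A s - 1) \<le> 1/4"
    using norm_triangle_ineq[of "A s - A r" "A r - 1"] by simp
  then have "norm ((of_complex (complex_of_real s) * u) ^ N) \<le> (1/4) / (1 - 1/4)"
    by (intro norm_le_if_mult_one_minus_eq_one[OF A]) simp_all
  then show ?case using norm_pow[of s] assms(1,2) by simp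
qed

(* Spectral radius zero: the radius is pushed from 0 to r in steps of a fixed size h, obtained from
   the uniform continuity of the resolvent on a disc. *)
theorem tendsto_power_norm_zero_if_spectrum_subset_zero:
  assumes "0 \<le> r"
  shows "(\<lambda>N. r ^ N * norm (u ^ N)) \<longlonglongrightarrow> 0"
proof -
  let ?P = "\<lambda>t. (\<lambda>N. t ^ N * norm (u ^ N)) \<longlonglongrightarrow> 0"
  have "uniformly_continuous_on (cball 0 (r + 1)) (resolvent u)"
    by (intro compact_uniformly_continuous continuous_at_imp_continuous_on ballI
        isCont_resolvent) simp
  then obtain d where "d > 0" and d: "\<And>x x'. x \<in> cball 0 (r + 1) \<Longrightarrow> x' \<in> cball 0 (r + 1) \<Longrightarrow>
      dist x' x < d \<Longrightarrow> dist (resolvent u x') (resolvent u x) < 1/16"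
    unfolding uniformly_continuous_on_def by (metis divide_pos_pos zero_less_numeral zero_less_one)
  define h where "h = min (d / 2) 1"
  have h: "0 < h" "h < d" "h \<le> 1" using \<open>d > 0\<close> by (auto simp: h_def)
  have step: "?P t" if "?P q" "0 \<le> q" "q \<le> r" "0 \<le> t" "t < q + h" for q t
  proof -
    have "\<forall>\<^sub>F N in sequentially. (q + h) ^ N * norm (u ^ N) \<le> 1/3"
    proof (rule eventually_power_norm_le_step[OF \<open>0 \<le> q\<close>])
      show "q < q + h" using h by simp
      show "norm (resolvent u x' - resolvent u x) \<le> 1/16"
        if "cmod x \<le> q + h" "cmod x' \<le> q + h" "cmod (x' - x) \<le> q + h - q" for x x'
        using d[of x x'] that h \<open>q \<le> r\<close> by (simp add: dist_norm)
      show "\<forall>\<^sub>F N in sequentially. q ^ N * norm (u ^ N) \<le> 1/8"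
        using order_tendstoD(2)[OF \<open>?P q\<close>, of "1/8"] by (auto elim: eventually_mono)
    qed
    then show ?thesis
      by (rule tendsto_power_mult_zero_if_eventually_bounded) (use that in auto)
  qed
  have reach: "?P (min r (real j * h / 2))" for j
  proof (induction j)
    case 0
    have "(\<lambda>N. 0 ^ N * norm (u ^ N)) \<longlonglongrightarrow> 0"
      by (intro tendsto_eventually eventually_mono[OF eventually_gt_at_top[of 0]]) simp
    then show ?case using \<open>0 \<le> r\<close> by simp
  next
    case (Suc j)
    show ?case
      by (rule step[OF Suc.IH]) (use h \<open>0 \<le> r\<close> in \<open>auto simp: min_def field_simps\<close>)
  qed
  obtain j :: nat where "2 * r / h < j" using reals_Archimedean2 by blast
  then have "min r (real j * h / 2) = r" using h by (simp add: field_simps)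
  with reach[of j] show ?thesis by simp
qed

end

lemma eq_zero_if_norm_le_power_bound:
  fixes u :: "'a::complex_banach_algebra_1"
  assumes "spectrum u \<subseteq> {0}" "0 \<le> r" "\<And>j. norm X \<le> r ^ j * norm (u ^ j) * norm X"
  shows "X = 0"
proof -
  have "\<forall>\<^sub>F j in sequentially. r ^ j * norm (u ^ j) < 1"
    using order_tendstoD(2)[OF tendsto_power_norm_zero_if_spectrum_subset_zero[OF assms(1,2)]] by simp
  then obtain j where j: "r ^ j * norm (u ^ j) < 1" by (meson eventually_sequentially order_refl)
  have "norm X * (1 - r ^ j * norm (u ^ j)) \<le> 0" using assms(3)[of j] by (simp add: algebra_simps)
  then show ?thesis using j by (simp add: mult_le_0_iff)
qed

lemma sylvester_eq_zero_left:
  fixes u :: "'a::complex_banach_algebra_1"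
  assumes "spectrum u \<subseteq> {0}" "alg_invertible B" "u * X = X * B"
  shows "X = 0"
proof -
  define C where "C = alg_inverse B"
  have "X = u * X * C"
    using alg_inverse(1)[OF assms(2)] assms(3) by (simp add: C_def mult.assoc)
  then have X: "X = u ^ j * X * C ^ j" for j
  proof (induction j)
    case (Suc j)
    have "u ^ Suc j * X * C ^ Suc j = u ^ j * (u * X * C) * C ^ j"
      by (simp only: power_Suc2[of u] power_Suc[of C] mult.assoc)
    then show ?case using Suc by simp
  qed simp
  have "norm X \<le> norm C ^ j * norm (u ^ j) * norm X" for j
  proof -
    have "norm X \<le> norm (u ^ j) * norm X * norm C ^ j"
      by (subst (1) X[of j])
        (intro order.trans[OF norm_mult_ineq] mult_mono norm_mult_ineq norm_power_ineq; simp)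
    then show ?thesis by (simp add: mult_ac)
  qed
  then show ?thesis by (rule eq_zero_if_norm_le_power_bound[OF assms(1) norm_ge_zero])
qed

lemma sylvester_eq_zero_right:
  fixes u :: "'a::complex_banach_algebra_1"
  assumes "spectrum u \<subseteq> {0}" "alg_invertible B" "X * u = B * X"
  shows "X = 0"
proof -
  define C where "C = alg_inverse B"
  have "C * X * u = C * B * X" using assms(3) by (simp add: mult.assoc)
  then have "X = C * X * u" using alg_inverse(2)[OF assms(2)] by (simp add: C_def)
  then have X: "X = C ^ j * X * u ^ j" for j
  proof (induction j)
    case (Suc j)
    have "C ^ Suc j * X * u ^ Suc j = C ^ j * (C * X * u) * u ^ j"
      by (simp only: power_Suc2[of C] power_Suc[of u] mult.assoc)
    then show ?case using Suc by simp
  qed simp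
  have "norm X \<le> norm C ^ j * norm (u ^ j) * norm X" for j
  proof -
    have "norm X \<le> norm C ^ j * norm X * norm (u ^ j)"
      by (subst (1) X[of j])
        (intro order.trans[OF norm_mult_ineq] mult_mono norm_mult_ineq norm_power_ineq; simp)
    then show ?thesis by (simp add: mult_ac)
  qed
  then show ?thesis by (rule eq_zero_if_norm_le_power_bound[OF assms(1) norm_ge_zero])
qed

(* Uniqueness for the Sylvester equation w 1 = 1 w stands in for Liouville's theorem. *)
lemma spectrum_nonempty:
  fixes w :: "'a::complex_banach_algebra_1"
  shows "spectrum w \<noteq> {}"
proof
  assume empty: "spectrum w = {}"
  then have "alg_invertible w" using mem_spectrum_iff[of 0 w] by simp
  then have "(1::'a) = 0" using empty by (intro sylvester_eq_zero_left[of w w]) simp_all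
  then show False by simp
qed

lemma quasinilpotent_iff_spectrum_subset:
  "quasinilpotent w \<longleftrightarrow> spectrum w \<subseteq> {0}"
  unfolding quasinilpotent_def using spectrum_nonempty[of w] by blast

theorem spectrum_peval:
  fixes w :: "'a::complex_banach_algebra_1"
  shows "spectrum (peval f w) = poly f ` spectrum w"
proof (intro equalityI subsetI)
  fix \<mu> assume \<mu>: "\<mu> \<in> spectrum (peval f w)"
  show "\<mu> \<in> poly f ` spectrum w"
  proof (cases "[:\<mu>:] - f = 0")
    case True
    then obtain t where "t \<in> spectrum w" using spectrum_nonempty by blast
    with True show ?thesis by (metis diff_eq_diff_eq diff_self image_eqI poly_0 poly_const_conv poly_diff)
  next
    case False
    show ?thesis
    proof (rule ccontr)
      assume "\<mu> \<notin> poly f ` spectrum w"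
      then have "alg_invertible (of_complex t - w)" if "poly ([:\<mu>:] - f) t = 0" for t
        using that by (auto simp: mem_spectrum_iff)
      then have "alg_invertible (peval ([:\<mu>:] - f) w)" by (rule alg_invertible_peval[OF False])
      with \<mu> show False by (simp add: mem_spectrum_iff)
    qed
  qed
next
  fix \<mu> assume "\<mu> \<in> poly f ` spectrum w"
  then obtain t where t: "t \<in> spectrum w" "\<mu> = poly f t" by blast
  show "\<mu> \<in> spectrum (peval f w)"
  proof (rule ccontr)
    assume "\<mu> \<notin> spectrum (peval f w)"
    then have "alg_invertible (peval ([:\<mu>:] - f) w)" by (simp add: mem_spectrum_iff)
    then have "alg_invertible (of_complex t - w)"
      using alg_invertible_diff_if_peval_root[of "[:\<mu>:] - f" t w] t(2) by simp
    with t(1) show False by (simp add: mem_spectrum_iff)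
  qed
qed

lemma spectrum_subset_zero_transfer:
  fixes w :: "'a::complex_banach_algebra_1"
  assumes "spectrum (peval f w) \<subseteq> {0}" "\<And>t. poly f t = 0 \<Longrightarrow> poly g t = 0"
  shows "spectrum (peval g w) \<subseteq> {0}"
  using assms unfolding spectrum_peval by auto

lemma spectrum_power_subset_zero_iff:
  fixes w :: "'a::complex_banach_algebra_1"
  assumes "0 < k"
  shows "spectrum (w ^ k) \<subseteq> {0} \<longleftrightarrow> spectrum w \<subseteq> {0}"
  using spectrum_subset_zero_transfer[of "monom 1 k" w "monom 1 1"]
    spectrum_subset_zero_transfer[of "monom 1 1" w "monom 1 k"] assms
  by (auto simp: poly_monom)

lemma spectrum_power_diff_power_subset_zero:
  fixes w :: "'a::complex_banach_algebra_1"
  assumes "spectrum (w - w ^ (n + 1)) \<subseteq> {0}"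
  shows "spectrum (w ^ k - (w ^ k) ^ (n + 1)) \<subseteq> {0}"
proof -
  let ?f = "monom 1 1 - monom 1 (n + 1) :: complex poly"
  let ?g = "monom 1 k - monom 1 (k * (n + 1)) :: complex poly"
  have "spectrum (peval ?g w) \<subseteq> {0}"
  proof (rule spectrum_subset_zero_transfer)
    show "spectrum (peval ?f w) \<subseteq> {0}" using assms by simp
    show "poly ?g t = 0" if "poly ?f t = 0" for t
    proof -
      have "t * (1 - t ^ n) = 0" using that by (simp add: poly_monom algebra_simps)
      then have "t ^ k * (1 - (t ^ n) ^ k) = 0" by (cases "k = 0") (auto simp: zero_power)
      then show ?thesis by (simp add: poly_monom algebra_simps power_mult[symmetric] power_add mult.commute[of n])
    qed
  qed
  then show ?thesis by (simp only: peval_diff peval_monom of_complex_1 mult_1_left power_mult)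
qed

lemma spectrum_diff_power_subset_zero_of_power:
  fixes w :: "'a::complex_banach_algebra_1"
  assumes "0 < k" "spectrum (w ^ k - (w ^ k) ^ (m + 1)) \<subseteq> {0}"
  shows "spectrum (w - w ^ (k * m + 1)) \<subseteq> {0}"
proof -
  let ?f = "monom 1 k - monom 1 (k * (m + 1)) :: complex poly"
  let ?g = "monom 1 1 - monom 1 (k * m + 1) :: complex poly"
  have "spectrum (peval ?g w) \<subseteq> {0}"
  proof (rule spectrum_subset_zero_transfer)
    show "spectrum (peval ?f w) \<subseteq> {0}"
      using assms(2) by (simp only: peval_diff peval_monom of_complex_1 mult_1_left power_mult)
    show "poly ?g t = 0" if "poly ?f t = 0" for t
    proof -
      have "t ^ k * (1 - t ^ (k * m)) = 0" using that by (simp add: poly_monom algebra_simps power_add)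
      then have "t * (1 - t ^ (k * m)) = 0" using assms(1) by (auto simp: zero_power)
      then show ?thesis by (simp add: poly_monom algebra_simps)
    qed
  qed
  then show ?thesis by simp
qed

section \<open>g\<pi>-Hirano invertibility\<close>

(* The corners (1 - p) a p and p a (1 - p) solve Sylvester equations with the quasinilpotent
   c (1 - p) on one side and the invertible c p + (1 - p) on the other. *)
lemma commute_spectral_idempotent:
  fixes a c p :: "'a::complex_banach_algebra_1"
  assumes p: "p * p = p" and cp: "c * p = p * c" and inv: "alg_invertible (c * p + (1 - p))"
    and spectrum_c: "spectrum (c * (1 - p)) \<subseteq> {0}" and ac: "a * c = c * a"
  shows "a * p = p * a"
proof -
  define q where "q = 1 - p"
  have pq: "p * q = 0" "q * p = 0" "q * q = q" and cq: "c * q = q * c"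
    using p cp by (simp_all add: q_def algebra_simps)
  have rules: "p * (p * z) = p * z" "q * (q * z) = q * z" "p * (q * z) = 0" "q * (p * z) = 0"
    "c * (p * z) = p * (c * z)" "c * (q * z) = q * (c * z)" "c * (a * z) = a * (c * z)" for z
    using p pq cp cq ac by (simp_all add: mult.assoc[symmetric])
  have "q * a * p = 0"
  proof (rule sylvester_eq_zero_left[OF spectrum_c inv])
    show "c * (1 - p) * (q * a * p) = q * a * p * (c * p + (1 - p))"
      unfolding q_def[symmetric] using p pq cp cq by (simp add: algebra_simps rules)
  qed
  moreover have "p * a * q = 0"
  proof (rule sylvester_eq_zero_right[OF spectrum_c inv])
    show "p * a * q * (c * (1 - p)) = (c * p + (1 - p)) * (p * a * q)"
      unfolding q_def[symmetric] using p pq cp cq by (simp add: algebra_simps rules)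
  qed
  moreover have "a * p = p * a * p + q * a * p" "p * a = p * a * p + p * a * q"
    by (simp_all add: q_def algebra_simps)
  ultimately show ?thesis by simp
qed

(* For a g\<pi>-Hirano inverse x of a this holds with p = a x: a p is invertible in the corner p A p,
   with spectrum there in the n-th roots of unity, and a (1 - p) is quasinilpotent. *)
definition gpi_Hirano_idempotent :: "'a::complex_banach_algebra_1 \<Rightarrow> 'a \<Rightarrow> nat \<Rightarrow> bool" where
  "gpi_Hirano_idempotent a p n \<longleftrightarrow> p * p = p \<and> a * p = p * a \<and> alg_invertible (a * p + (1 - p)) \<and>
     spectrum (a * (1 - p)) \<subseteq> {0} \<and> spectrum (a * p - (a * p) ^ (n + 1)) \<subseteq> {0}"

lemma spectrum_diff_power_mult_subset_zero_iff:
  fixes a p :: "'a::complex_banach_algebra_1"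
  assumes p: "p * p = p" and ap: "a * p = p * a"
  shows "spectrum (a - a ^ (n + 1) * p) \<subseteq> {0} \<longleftrightarrow>
    spectrum (a * (1 - p)) \<subseteq> {0} \<and> spectrum (a * p - (a * p) ^ (n + 1)) \<subseteq> {0}"
proof -
  define v where "v = a * p - (a * p) ^ (n + 1)"
  have v: "v = a * p - a ^ (n + 1) * p"
    unfolding v_def using power_mult_commuting_idempotent[OF p ap, of "n + 1"] by simp
  have "p * (a * z) = a * (p * z)" "p * (a ^ (n + 1) * z) = a ^ (n + 1) * (p * z)" for z
    using ap power_commuting_commutes[OF ap, of "n + 1"] by (simp_all add: mult.assoc[symmetric])
  then have vp: "v * p = v" "p * v = v" unfolding v using p by (simp_all add: algebra_simps)
  have pq: "(1 - p) * p = 0" "p * (1 - p) = 0" using p by (simp_all add: algebra_simps)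
  have "a * (1 - p) * v = a * ((1 - p) * p) * v" using vp(2) by (simp only: mult.assoc)
  moreover have "v * (a * (1 - p)) = v * a * (p * (1 - p))"
    using vp(1) ap by (metis mult.assoc)
  ultimately have "a * (1 - p) * v = 0" "v * (a * (1 - p)) = 0" using pq by simp_all
  moreover have "a - a ^ (n + 1) * p = a * (1 - p) + v" unfolding v by (simp add: algebra_simps)
  ultimately show ?thesis unfolding v_def by (simp add: spectrum_add_orthogonal_subset_zero_iff)
qed

lemma gpi_Hirano_idempotent_of_inverse:
  fixes a :: "'a::complex_banach_algebra_1"
  assumes xax: "x * a * x = x" and ax: "a * x = x * a"
    and qnil: "quasinilpotent (a - a ^ (n + 2) * x)"
  shows "gpi_Hirano_idempotent a (a * x) n"
proof -
  define p where "p = a * x"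
  have rules: "a * x = p" "x * a = p" "p * p = p" "p * x = x" "x * p = x" "p * a = a * p"
    "a * (x * z) = p * z" "x * (a * z) = p * z" "p * (p * z) = p * z" "p * (x * z) = x * z"
    "x * (p * z) = x * z" "p * (a * z) = a * (p * z)" for z
    using xax ax unfolding p_def by (simp_all add: mult.assoc[symmetric]) (metis mult.assoc)+
  have "(a * p + (1 - p)) * (x + (1 - p)) = 1" "(x + (1 - p)) * (a * p + (1 - p)) = 1"
    by (simp_all add: algebra_simps rules)
  then have "alg_invertible (a * p + (1 - p))" unfolding alg_invertible_def by blast
  moreover have "a ^ (n + 2) * x = a ^ (n + 1) * p"
    using power_Suc2[of a "n + 1"] by (simp add: p_def mult.assoc)
  then have "spectrum (a - a ^ (n + 1) * p) \<subseteq> {0}"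
    using qnil unfolding quasinilpotent_iff_spectrum_subset by simp
  ultimately show ?thesis
    using spectrum_diff_power_mult_subset_zero_iff[of p a n] rules(3,6)
    unfolding gpi_Hirano_idempotent_def p_def[symmetric] by simp
qed

lemma gpi_Hirano_invertible_of_idempotent:
  fixes a :: "'a::complex_banach_algebra_1"
  assumes "gpi_Hirano_idempotent a p n" "0 < n"
  shows "gpi_Hirano_invertible a"
proof -
  from assms(1) have p: "p * p = p" and ap: "a * p = p * a"
    and inv: "alg_invertible (a * p + (1 - p))" and spectrum: "spectrum (a - a ^ (n + 1) * p) \<subseteq> {0}"
    unfolding gpi_Hirano_idempotent_def using spectrum_diff_power_mult_subset_zero_iff by blast+
  define B where "B = a * p + (1 - p)"
  define C where "C = alg_inverse B"
  define x where "x = C * p"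
  have pa: "p * (a * z) = a * (p * z)" for z using ap by (simp add: mult.assoc[symmetric])
  have Bp: "B * p = a * p" using p by (simp add: B_def algebra_simps)
  have "a * B = B * a" "p * B = B * p"
    using p pa by (simp_all add: B_def algebra_simps ap[symmetric])
  then have aC: "a * C = C * a" and pC: "p * C = C * p"
    unfolding C_def using alg_inverse_commute[OF inv[folded B_def]] by blast+
  have "C * (a * p) = C * B * p" by (simp only: Bp mult.assoc)
  also have "\<dots> = p" using alg_inverse(2)[OF inv[folded B_def]] by (simp add: C_def)
  finally have "C * (a * p) = p" .
  moreover have "a * x = C * (a * p)" unfolding x_def by (simp only: mult.assoc[symmetric] aC)
  moreover have "x * a = C * (a * p)" unfolding x_def by (simp only: mult.assoc ap)
  ultimately have ax: "a * x = p" and xa: "x * a = p" by simp_all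
  have "p * x = x" unfolding x_def by (simp only: mult.assoc[symmetric] pC) (simp only: mult.assoc p)
  then have xax: "x * a * x = x" by (simp only: xa)
  have "a ^ (n + 2) * x = a ^ (n + 1) * p"
    using power_Suc2[of a "n + 1"] ax by (simp add: mult.assoc)
  then have "quasinilpotent (a - a ^ (n + 2) * x)"
    using spectrum by (simp only: quasinilpotent_iff_spectrum_subset)
  then show ?thesis
    unfolding gpi_Hirano_invertible_def using xax ax xa \<open>0 < n\<close>
    by (intro exI[of _ x] conjI exI[of _ n]) simp_all
qed

lemma gpi_Hirano_invertible_iff_idempotent:
  "gpi_Hirano_invertible a \<longleftrightarrow> (\<exists>p n. 0 < n \<and> gpi_Hirano_idempotent a p n)"
  using gpi_Hirano_idempotent_of_inverse gpi_Hirano_invertible_of_idempotent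
  unfolding gpi_Hirano_invertible_def by metis

lemma gpi_Hirano_idempotent_power:
  fixes a :: "'a::complex_banach_algebra_1"
  assumes "gpi_Hirano_idempotent a p n" "0 < k"
  shows "gpi_Hirano_idempotent (a ^ k) p n"
proof -
  from assms(1) have p: "p * p = p" and ap: "a * p = p * a"
    and inv: "alg_invertible (a * p + (1 - p))" and spectrum_u: "spectrum (a * (1 - p)) \<subseteq> {0}"
    and spectrum_v: "spectrum (a * p - (a * p) ^ (n + 1)) \<subseteq> {0}"
    unfolding gpi_Hirano_idempotent_def by auto
  have q: "(1 - p) * (1 - p) = 1 - p" and aq: "a * (1 - p) = (1 - p) * a"
    using p ap by (simp_all add: algebra_simps)
  have "alg_invertible (a ^ k * p + (1 - p))"
    using inv alg_invertible_power_iff[OF assms(2)] power_add_complement_idempotent[OF p ap] by metis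
  moreover have "spectrum (a ^ k * (1 - p)) \<subseteq> {0}"
    using spectrum_u spectrum_power_subset_zero_iff[OF assms(2)]
      power_mult_commuting_idempotent[OF q aq assms(2)] by metis
  moreover have "spectrum (a ^ k * p - (a ^ k * p) ^ (n + 1)) \<subseteq> {0}"
    using spectrum_power_diff_power_subset_zero[OF spectrum_v, of k]
      power_mult_commuting_idempotent[OF p ap assms(2)] by simp
  ultimately show ?thesis
    using p power_commuting_commutes[OF ap] by (simp add: gpi_Hirano_idempotent_def)
qed

lemma gpi_Hirano_idempotent_root:
  fixes a :: "'a::complex_banach_algebra_1"
  assumes "gpi_Hirano_idempotent (a ^ k) p m" "0 < k"
  shows "gpi_Hirano_idempotent a p (k * m)"
proof -
  from assms(1) have p: "p * p = p" and akp: "a ^ k * p = p * a ^ k"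
    and inv: "alg_invertible (a ^ k * p + (1 - p))" and spectrum_u: "spectrum (a ^ k * (1 - p)) \<subseteq> {0}"
    and spectrum_v: "spectrum (a ^ k * p - (a ^ k * p) ^ (m + 1)) \<subseteq> {0}"
    unfolding gpi_Hirano_idempotent_def by auto
  have ap: "a * p = p * a"
    using commute_spectral_idempotent[OF p akp inv spectrum_u] power_commutes[of a k] by simp
  have q: "(1 - p) * (1 - p) = 1 - p" and aq: "a * (1 - p) = (1 - p) * a"
    using p ap by (simp_all add: algebra_simps)
  have "alg_invertible (a * p + (1 - p))"
    using inv alg_invertible_power_iff[OF assms(2)] power_add_complement_idempotent[OF p ap] by metis
  moreover have "spectrum (a * (1 - p)) \<subseteq> {0}"
    using spectrum_u spectrum_power_subset_zero_iff[OF assms(2)]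
      power_mult_commuting_idempotent[OF q aq assms(2)] by metis
  moreover have "spectrum (a * p - (a * p) ^ (k * m + 1)) \<subseteq> {0}"
    using spectrum_diff_power_subset_zero_of_power[OF assms(2), of "a * p" m] spectrum_v
      power_mult_commuting_idempotent[OF p ap assms(2)] by simp
  ultimately show ?thesis using p ap by (simp add: gpi_Hirano_idempotent_def)
qed

theorem corollary2p3:
  fixes a :: "'a::complex_banach_algebra_1" and k :: nat
  assumes "k > 0"
  shows "gpi_Hirano_invertible a \<longleftrightarrow> gpi_Hirano_invertible (a ^ k)"
proof
  assume "gpi_Hirano_invertible a"
  then obtain p n where "0 < n" "gpi_Hirano_idempotent a p n"
    unfolding gpi_Hirano_invertible_iff_idempotent by blast
  then show "gpi_Hirano_invertible (a ^ k)"
    unfolding gpi_Hirano_invertible_iff_idempotent using gpi_Hirano_idempotent_power assms by blast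
next
  assume "gpi_Hirano_invertible (a ^ k)"
  then obtain p m where "0 < m" "gpi_Hirano_idempotent (a ^ k) p m"
    unfolding gpi_Hirano_invertible_iff_idempotent by blast
  then have "0 < k * m" "gpi_Hirano_idempotent a p (k * m)"
    using gpi_Hirano_idempotent_root assms by simp_all
  then show "gpi_Hirano_invertible a"
    unfolding gpi_Hirano_invertible_iff_idempotent by blast
qed

end
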